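(* Fix $n\ge1$ and $\varepsilon>0$. If $f_1,f_2\in\mathrm{NN}_n$ satisfy $\mathrm{MSE}(f_i)\le R(\mathrm{NN}_n)+\varepsilon$ for $i\in\{1,2\}$, then \[ D(f_1,f_2)\le4\big(R(\mathrm{NN}_n)-R(\mathrm{NN}_{2n})+\varepsilon\big). \]
   Context: $P$ is a distribution on $\mathcal X\times\mathcal Y$ with $\mathcal X\subseteq\mathbb R^m$, $\mathcal Y\subseteq\mathbb R$; expectations are over $(x,y)\sim P$; $\mathrm{MSE}(f)=\mathbb E[(y-f(x))^2]$, $R(\mathcal F)=\inf_{f\in\mathcal F}\mathrm{MSE}(f)$, $D(f_1,f_2)=\mathbb E[(f_1(x)-f_2(x))^2]$. Let $\sigma(t)=\max\{0,t\}$. For $n\ge0$, $\mathrm{NN}_n$ is the class of real-valued functions on $\mathcal X$ computable by a finite directed acyclic graph with at most $n$ internal (non-input, non-output) nodes, where each internal node computes $\sigma(\langle w,u\rangle+b)$ for the vector $u$ of its inputs and some $w,b$, and the output node computes an affine combination of the input coordinates and the internal node values. *)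

theory Defs
  imports "HOL-Probability.Probability"
begin

definition relu :: "real \<Rightarrow> real" where
  "relu t = max 0 t"

text \<open>A ReLU network with internal nodes 0,1,...,k-1 listed in a topological order
  of the DAG. Internal node j sees the input coordinates (weights W j), the
  values of the earlier internal nodes i < j (weights V j i; a zero weight means
  no edge) and a bias B j. nodevals W V B x j is the list of the values of
  internal nodes 0..j-1 at input x.\<close>
fun nodevals :: "(nat \<Rightarrow> real^'m) \<Rightarrow> (nat \<Rightarrow> nat \<Rightarrow> real) \<Rightarrow> (nat \<Rightarrow> real)
                 \<Rightarrow> real^'m \<Rightarrow> nat \<Rightarrow> real list" where
  "nodevals W V B x 0 = []"
| "nodevals W V B x (Suc j) =
     (let h = nodevals W V B x j
      in h @ [relu (W j \<bullet> x + (\<Sum>i<j. V j i * h ! i) + B j)])"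

definition NN :: "nat \<Rightarrow> (real^'m \<Rightarrow> real) set" where
  "NN n = {f. \<exists>k\<le>n. \<exists>W V B (a::real^'m) (c::nat\<Rightarrow>real) (d::real).
              \<forall>x. f x = a \<bullet> x + (\<Sum>i<k. c i * nodevals W V B x k ! i) + d}"

definition MSE :: "((real^'m) \<times> real) measure \<Rightarrow> (real^'m \<Rightarrow> real) \<Rightarrow> real" where
  "MSE P f = (\<integral>z. (snd z - f (fst z))\<^sup>2 \<partial>P)"

definition Risk :: "((real^'m) \<times> real) measure \<Rightarrow> (real^'m \<Rightarrow> real) set \<Rightarrow> real" where
  "Risk P F = (INF f\<in>F. MSE P f)"

definition Dist :: "((real^'m) \<times> real) measure \<Rightarrow> (real^'m \<Rightarrow> real) \<Rightarrow> (real^'m \<Rightarrow> real) \<Rightarrow> real" where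
  "Dist P f1 f2 = (\<integral>z. (f1 (fst z) - f2 (fst z))\<^sup>2 \<partial>P)"

end

theory Submission
  imports Defs
begin

text \<open>Running the networks of f1 and f2 side by side and averaging their outputs
  shows that the midpoint g = (f1 + f2)/2 lies in NN 2n, so MSE g \<ge> R(NN 2n). The
  parallelogram identity (a - b)^2 = 2(y - a)^2 + 2(y - b)^2 - 4(y - (a + b)/2)^2,
  integrated over P, gives D(f1, f2) = 2 MSE f1 + 2 MSE f2 - 4 MSE g, and the two
  near-optimality bounds finish the estimate.\<close>

lemma length_nodevals [simp]: "length (nodevals W V B x j) = j"
  by (induction j) (auto simp: Let_def)

lemma sum_lessThan_add:
  fixes f :: "nat \<Rightarrow> 'a::comm_monoid_add"
  shows "(\<Sum>i<k + t. f i) = (\<Sum>i<k. f i) + (\<Sum>s<t. f (k + s))"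
  by (induction t) (auto simp: add.assoc)

lemma NN_I:
  assumes "k \<le> n" and "\<And>x. f x = a \<bullet> x + (\<Sum>i<k. c i * nodevals W V B x k ! i) + d"
  shows "f \<in> NN n"
  using assms unfolding NN_def by blast

lemma NN_E:
  assumes "f \<in> NN n"
  obtains k a c W V B d where "k \<le> n"
    and "\<And>x. f x = a \<bullet> x + (\<Sum>i<k. c i * nodevals W V B x k ! i) + d"
  using assms unfolding NN_def by auto

text \<open>Parallel composition of a network with k nodes and a second one: nodes j \<ge> k are
  those of the second network shifted by k, and no edge joins the two blocks.\<close>

definition par_W :: "nat \<Rightarrow> (nat \<Rightarrow> real^'m) \<Rightarrow> (nat \<Rightarrow> real^'m) \<Rightarrow> nat \<Rightarrow> real^'m" where
  "par_W k W1 W2 j = (if j < k then W1 j else W2 (j - k))"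

definition par_V :: "nat \<Rightarrow> (nat \<Rightarrow> nat \<Rightarrow> real) \<Rightarrow> (nat \<Rightarrow> nat \<Rightarrow> real) \<Rightarrow> nat \<Rightarrow> nat \<Rightarrow> real" where
  "par_V k V1 V2 j i = (if j < k then V1 j i else if i < k then 0 else V2 (j - k) (i - k))"

definition par_B :: "nat \<Rightarrow> (nat \<Rightarrow> real) \<Rightarrow> (nat \<Rightarrow> real) \<Rightarrow> nat \<Rightarrow> real" where
  "par_B k B1 B2 j = (if j < k then B1 j else B2 (j - k))"

lemma nodevals_parallel_prefix:
  "j \<le> k \<Longrightarrow>
   nodevals (par_W k W1 W2) (par_V k V1 V2) (par_B k B1 B2) x j = nodevals W1 V1 B1 x j"
  by (induction j) (simp_all add: Let_def par_W_def par_V_def par_B_def)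

lemma nodevals_parallel:
  "nodevals (par_W k W1 W2) (par_V k V1 V2) (par_B k B1 B2) x (k + t) =
   nodevals W1 V1 B1 x k @ nodevals W2 V2 B2 x t"
proof (induction t)
  case 0
  show ?case using nodevals_parallel_prefix[of k k] by simp
next
  case (Suc t)
  let ?h1 = "nodevals W1 V1 B1 x k" and ?h2 = "nodevals W2 V2 B2 x t"
  have "(\<Sum>i<k + t. par_V k V1 V2 (k + t) i * (?h1 @ ?h2) ! i) = (\<Sum>s<t. V2 t s * ?h2 ! s)"
    by (simp add: sum_lessThan_add par_V_def nth_append)
  with Suc show ?case by (simp add: Let_def par_W_def par_B_def)
qed

lemma NN_add:
  assumes "f1 \<in> NN n1" and "f2 \<in> NN n2"
  shows "(\<lambda>x. f1 x + f2 x) \<in> NN (n1 + n2)"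
proof -
  obtain k1 a1 c1 W1 V1 B1 d1 where k1: "k1 \<le> n1" and
    f1: "\<And>x. f1 x = a1 \<bullet> x + (\<Sum>i<k1. c1 i * nodevals W1 V1 B1 x k1 ! i) + d1"
    using assms(1) by (rule NN_E) fast
  obtain k2 a2 c2 W2 V2 B2 d2 where k2: "k2 \<le> n2" and
    f2: "\<And>x. f2 x = a2 \<bullet> x + (\<Sum>i<k2. c2 i * nodevals W2 V2 B2 x k2 ! i) + d2"
    using assms(2) by (rule NN_E) fast
  have k: "k1 + k2 \<le> n1 + n2" using k1 k2 by simp
  show ?thesis
    by (rule NN_I[OF k, where a = "a1 + a2" and d = "d1 + d2"
          and c = "\<lambda>i. if i < k1 then c1 i else c2 (i - k1)"
          and W = "par_W k1 W1 W2" and V = "par_V k1 V1 V2" and B = "par_B k1 B1 B2"])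
      (simp add: f1 f2 nodevals_parallel sum_lessThan_add nth_append inner_add_left)
qed

lemma NN_scale:
  assumes "f \<in> NN n"
  shows "(\<lambda>x. r * f x) \<in> NN n"
proof -
  obtain k a c W V B d where k: "k \<le> n" and
    f: "\<And>x. f x = a \<bullet> x + (\<Sum>i<k. c i * nodevals W V B x k ! i) + d"
    using assms by (rule NN_E) fast
  show ?thesis
    by (rule NN_I[OF k, where a = "r *\<^sub>R a" and c = "\<lambda>i. r * c i" and d = "r * d"])
      (simp add: f distrib_left sum_distrib_left mult.assoc)
qed

lemma NN_midpoint:
  assumes "f1 \<in> NN n" and "f2 \<in> NN n"
  shows "(\<lambda>x. (f1 x + f2 x) / 2) \<in> NN (2 * n)"
  using NN_scale[OF NN_add[OF assms], of "1/2"] by (simp add: mult_2)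

lemma Risk_le_MSE:
  assumes "f \<in> F"
  shows "Risk P F \<le> MSE P f"
proof -
  have "bdd_below (MSE P ` F)"
    by (rule bdd_belowI[of _ 0]) (auto simp: MSE_def)
  then show ?thesis unfolding Risk_def using assms by (rule cINF_lower)
qed

lemma Dist_parallelogram:
  assumes "integrable P (\<lambda>z. (snd z - f1 (fst z))\<^sup>2)"
    and "integrable P (\<lambda>z. (snd z - f2 (fst z))\<^sup>2)"
    and "integrable P (\<lambda>z. (snd z - (f1 (fst z) + f2 (fst z)) / 2)\<^sup>2)"
  shows "Dist P f1 f2 = 2 * MSE P f1 + 2 * MSE P f2 - 4 * MSE P (\<lambda>x. (f1 x + f2 x) / 2)"
proof -
  have "(\<lambda>z. (f1 (fst z) - f2 (fst z))\<^sup>2) =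
        (\<lambda>z. 2 * (snd z - f1 (fst z))\<^sup>2 + 2 * (snd z - f2 (fst z))\<^sup>2
             - 4 * (snd z - (f1 (fst z) + f2 (fst z)) / 2)\<^sup>2)"
    by (rule ext) (simp add: power2_eq_square field_simps)
  then show ?thesis unfolding Dist_def MSE_def using assms by simp
qed

theorem corollary2:
  fixes P :: "((real^'m) \<times> real) measure"
    and n :: nat and \<epsilon> :: real and f1 f2 :: "real^'m \<Rightarrow> real"
  assumes "prob_space P"
    and "sets P = sets borel"
    and "\<And>k f. f \<in> NN k \<Longrightarrow> integrable P (\<lambda>z. (snd z - f (fst z))\<^sup>2)"
    and "n \<ge> 1" and "\<epsilon> > 0"
    and "f1 \<in> NN n" and "f2 \<in> NN n"
    and "MSE P f1 \<le> Risk P (NN n) + \<epsilon>"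
    and "MSE P f2 \<le> Risk P (NN n) + \<epsilon>"
  shows "Dist P f1 f2 \<le> 4 * (Risk P (NN n) - Risk P (NN (2 * n)) + \<epsilon>)"
proof -
  let ?g = "\<lambda>x. (f1 x + f2 x) / 2"
  have g: "?g \<in> NN (2 * n)" using NN_midpoint assms(6,7) .
  have "Dist P f1 f2 = 2 * MSE P f1 + 2 * MSE P f2 - 4 * MSE P ?g"
    using assms(3)[OF assms(6)] assms(3)[OF assms(7)] assms(3)[OF g]
    by (intro Dist_parallelogram) simp_all
  moreover have "Risk P (NN (2 * n)) \<le> MSE P ?g" using Risk_le_MSE g .
  ultimately show ?thesis using assms(8,9) by simp
qed

end
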